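(* Let $k, m \in \mathbb N$ be such that there exists a real linear map $\phi \colon \mathcal H_{2k}^0 \to M_m$ with $\phi(\mathcal{IH}_{2k}^0) \subset \mathcal U_m$. Then $m \ge 2k$.
   Context: $M_m$ is the set of $m\times m$ complex matrices, $\mathcal U_m$ the set of unitary ones, $\mathcal H_n^0$ the real vector space of trace-zero $n\times n$ complex hermitian matrices, and $\mathcal{IH}_n^0 = \mathcal H_n^0 \cap \mathcal U_n$. *)

theory Defs
  imports "HOL-Analysis.Analysis"
begin

definition cadj :: "complex^'n^'n \<Rightarrow> complex^'n^'n" where
  "cadj A = (\<chi> i j. cnj (A $ j $ i))"

definition unitary_mats :: "(complex^'n^'n) set" where
  "unitary_mats = {U. U ** cadj U = mat 1 \<and> cadj U ** U = mat 1}"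

definition herm0 :: "(complex^'n^'n) set" where
  "herm0 = {A. cadj A = A \<and> trace A = 0}"

definition iherm0 :: "(complex^'n^'n) set" where
  "iherm0 = herm0 \<inter> unitary_mats"

definition real_linear_on_herm0 :: "(complex^'n^'n \<Rightarrow> complex^'m^'m) \<Rightarrow> bool" where
  "real_linear_on_herm0 \<phi> \<longleftrightarrow>
     (\<forall>A\<in>herm0. \<forall>B\<in>herm0. \<phi> (A + B) = \<phi> A + \<phi> B) \<and>
     (\<forall>A\<in>herm0. \<forall>r::real. \<phi> (r *\<^sub>R A) = r *\<^sub>R \<phi> A)"

end

theory Submission
  imports Defs
begin

(* A column T A of phi A is a real-linear map on H_n^0 that sends IH_n^0 to unit vectors.
   Whenever B + A and B - A both lie in IH_n^0, this forces T A _|_ T B and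
   |T A|^2 + |T B|^2 = 1.  Testing it on diagonal sign matrices shows that
   c(a,b) = |T (E_aa - E_bb)|^2 satisfies the four-point condition, so c(a,b) = mu_a + mu_b
   with sum mu = 1, and |T (diag d)|^2 = sum_x mu_x d_x^2 for traceless real d.
   Let mu_a be maximal, so mu_a >= 1/n.  If T killed e_a w^H + w e_a^H for a unit vector
   w _|_ e_a, a Householder reflection fixing e_a and moving a multiple of some e_b to w
   would give a conjugated map with weights mu'_a = mu_a and mu'_a + mu'_b = 0, while
   |T' (n E_bb - I)|^2 = n (n - 2) mu'_b + 1 >= 0 gives mu_a <= 1 / (n (n - 2)):
   impossible for n >= 4.  Hence w |-> (T (e_a w'^H + w' e_a^H), w_a), where w' is w with its a-th entry
   set to 0, is an injective real-linear map C^n -> C^m x C and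
   2 n <= 2 m + 2.  Finally m is even: three pairwise anticommuting elements of IH_n^0
   yield two anticommuting invertible m x m matrices, so (-1)^m = 1. *)

lemma cadj_add: "cadj (A + B) = cadj A + cadj B"
  by (simp add: cadj_def vec_eq_iff)

lemma cadj_diff: "cadj (A - B) = cadj A - cadj B"
  by (simp add: cadj_def vec_eq_iff)

lemma cadj_scaleR: "cadj (r *\<^sub>R A) = r *\<^sub>R cadj A"
  by (simp add: cadj_def vec_eq_iff)

lemma cadj_cadj [simp]: "cadj (cadj A) = A"
  by (simp add: cadj_def vec_eq_iff)

lemma cadj_mat_1 [simp]: "cadj (mat 1 :: complex^'n^'n) = mat 1"
  by (simp add: cadj_def mat_def vec_eq_iff)

lemma cadj_mult: "cadj (A ** B) = cadj B ** cadj (A :: complex^'n::finite^'n)"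
  by (simp add: cadj_def matrix_matrix_mult_def vec_eq_iff mult.commute)

lemma matrix_add_rdistrib: "(A + B) ** C = A ** C + B ** (C :: 'a::semiring_1^'n::finite^'m)"
  by (simp add: matrix_matrix_mult_def vec_eq_iff sum.distrib distrib_right)

lemma matrix_diff_ldistrib: "A ** (B - C) = A ** B - A ** (C :: 'a::ring_1^'n::finite^'m)"
  by (simp add: matrix_matrix_mult_def vec_eq_iff sum_subtractf right_diff_distrib)

lemma matrix_diff_rdistrib: "(A - B) ** C = A ** C - B ** (C :: 'a::ring_1^'n::finite^'m)"
  by (simp add: matrix_matrix_mult_def vec_eq_iff sum_subtractf left_diff_distrib)

lemma matrix_neg_left: "(- A) ** B = - (A ** (B :: 'a::ring_1^'n::finite^'m))"
  by (simp add: matrix_matrix_mult_def vec_eq_iff sum_negf)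

lemma matrix_neg_right: "A ** (- B) = - (A ** (B :: 'a::ring_1^'n::finite^'m))"
  by (simp add: matrix_matrix_mult_def vec_eq_iff sum_negf)

lemma matrix_scaleR_right: "A ** (r *\<^sub>R B) = r *\<^sub>R (A ** (B :: 'a::real_algebra_1^'n::finite^'m))"
  by (simp add: matrix_scalar_ac scalar_matrix_assoc)

lemma scaleR_matrix_vector_mult: "(r *\<^sub>R A) *v x = r *\<^sub>R (A *v (x :: 'a::real_algebra_1^'n::finite))"
  by (simp add: matrix_vector_mult_def vec_eq_iff scaleR_sum_right)

lemma trace_scaleR: "trace (r *\<^sub>R A) = r *\<^sub>R trace (A :: complex^'n^'n)"
  by (simp add: trace_def scaleR_sum_right)

lemma det_uminus: "det (- A) = (-1) ^ CARD('n) * det (A :: 'a::comm_ring_1^'n::finite^'n)"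
proof -
  have "- A = (\<chi> i. (-1) *s A$i)"
    by (simp add: vec_eq_iff)
  then show ?thesis
    using det_rows_mul[of "\<lambda>_. -1" "\<lambda>i. A$i"] by simp
qed

lemma norm_axis: "norm (axis i x) = norm (x :: 'a::real_normed_vector)"
  by (simp add: norm_vec_def L2_set_def axis_def if_distrib[of norm] if_distrib[of power2]
      cong: if_cong)

definition cinner :: "complex^'n::finite \<Rightarrow> complex^'n \<Rightarrow> complex" where
  "cinner x y = (\<Sum>i\<in>UNIV. cnj (x$i) * y$i)"

lemma cinner_self: "cinner x x = of_real ((norm x)\<^sup>2)"
proof -
  have "cnj (x$i) * x$i = of_real ((cmod (x$i))\<^sup>2)" for i
    using complex_norm_square[of "x$i"] by (simp add: mult.commute)
  then show ?thesis
    by (simp add: cinner_def norm_vec_def L2_set_def sum_nonneg del: of_real_power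
        flip: of_real_sum)
qed

lemma cinner_diff_left: "cinner (x - y) z = cinner x z - cinner y z"
  by (simp add: cinner_def sum_subtractf algebra_simps)

lemma cinner_diff_right: "cinner x (y - z) = cinner x y - cinner x z"
  by (simp add: cinner_def sum_subtractf algebra_simps)

lemma cnj_cinner: "cnj (cinner x y) = cinner y x"
  by (simp add: cinner_def mult.commute)

lemma cinner_axis_right: "cinner x (axis i c) = cnj (x$i) * c"
  by (simp add: cinner_def axis_def if_distrib[of "\<lambda>t. _ * t"] cong: if_cong)

lemma cinner_columns: "cinner (column i U) (column j U) = (cadj U ** U)$i$j"
  by (simp add: cinner_def column_def cadj_def matrix_matrix_mult_def)

definition outer :: "complex^'n \<Rightarrow> complex^'n \<Rightarrow> complex^'n^'n" where
  "outer x y = (\<chi> i j. x$i * cnj (y$j))"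

lemma cadj_outer: "cadj (outer x y) = outer y x"
  by (simp add: cadj_def outer_def vec_eq_iff)

lemma outer_mult_vec: "outer x y *v z = cinner y z *s x"
  by (simp add: outer_def cinner_def matrix_vector_mult_def vec_eq_iff sum_distrib_left mult_ac)

lemma matrix_mult_outer: "U ** outer x y = outer (U *v x) y"
  by (simp add: outer_def matrix_matrix_mult_def matrix_vector_mult_def vec_eq_iff
      sum_distrib_right mult.assoc)

lemma outer_mult_matrix: "outer x y ** V = outer x (cadj V *v y)"
  by (simp add: outer_def matrix_matrix_mult_def matrix_vector_mult_def vec_eq_iff cadj_def
      sum_distrib_left mult_ac)

lemma outer_congruence: "U ** outer x y ** cadj U = outer (U *v x) (U *v y)"
  by (simp add: matrix_mult_outer outer_mult_matrix)

lemma outer_self_square: "outer v v ** outer v v = (norm v)\<^sup>2 *\<^sub>R outer v v"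
proof -
  have "outer v v ** outer v v = outer v (cinner v v *s v)"
    by (simp add: outer_mult_matrix cadj_outer outer_mult_vec)
  then show ?thesis
    by (simp add: cinner_self outer_def vec_eq_iff scaleR_conv_of_real[where 'a=complex] mult_ac)
qed

definition sym_outer :: "complex^'n \<Rightarrow> complex^'n \<Rightarrow> complex^'n^'n" where
  "sym_outer x y = outer x y + outer y x"

lemma sym_outer_congruence:
  "U ** sym_outer x y ** cadj U = sym_outer (U *v x) (U *v y)"
  by (simp add: sym_outer_def matrix_add_ldistrib matrix_add_rdistrib outer_congruence)

lemma sym_outer_add: "sym_outer x (y + z) = sym_outer x y + sym_outer x z"
  by (simp add: sym_outer_def outer_def vec_eq_iff algebra_simps)

lemma sym_outer_scaleR: "sym_outer x (r *\<^sub>R y) = r *\<^sub>R sym_outer x y"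
  by (simp add: sym_outer_def outer_def vec_eq_iff algebra_simps scaleR_conv_of_real[where 'a=complex])

lemma herm0_add: "A \<in> herm0 \<Longrightarrow> B \<in> herm0 \<Longrightarrow> A + B \<in> herm0"
  by (simp add: herm0_def cadj_add trace_add)

lemma herm0_scaleR: "A \<in> herm0 \<Longrightarrow> r *\<^sub>R A \<in> herm0"
  by (simp add: herm0_def cadj_scaleR trace_scaleR)

lemma herm0_zero: "0 \<in> herm0"
  by (simp add: herm0_def cadj_def trace_def vec_eq_iff)

lemma herm0_sum: "(\<And>x. x \<in> S \<Longrightarrow> f x \<in> herm0) \<Longrightarrow> sum f S \<in> herm0"
  by (induction S rule: infinite_finite_induct) (auto simp: herm0_zero herm0_add)

lemma iherm0_iff: "A \<in> iherm0 \<longleftrightarrow> A \<in> herm0 \<and> A ** A = mat 1"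
  by (auto simp: iherm0_def herm0_def unitary_mats_def)

lemma unitary_matsD:
  "U \<in> unitary_mats \<Longrightarrow> U ** cadj U = mat 1" "U \<in> unitary_mats \<Longrightarrow> cadj U ** U = mat 1"
  by (simp_all add: unitary_mats_def)

lemma unitary_conj_herm0:
  assumes "U \<in> unitary_mats" "A \<in> herm0"
  shows "U ** A ** cadj U \<in> herm0"
proof -
  have "trace (U ** A ** cadj U) = trace (cadj U ** U ** A)"
    by (metis matrix_mul_assoc trace_mul_sym)
  then show ?thesis
    using assms by (simp add: herm0_def unitary_mats_def cadj_mult matrix_mul_assoc)
qed

lemma unitary_conj_iherm0:
  assumes "U \<in> unitary_mats" "A \<in> iherm0"
  shows "U ** A ** cadj U \<in> iherm0"
proof -
  have "(U ** A ** cadj U) ** (U ** A ** cadj U) = U ** (A ** (cadj U ** U) ** A) ** cadj U"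
    by (simp add: matrix_mul_assoc)
  also have "\<dots> = mat 1"
    using assms by (simp add: iherm0_iff unitary_mats_def)
  finally show ?thesis
    using assms unitary_conj_herm0[of U A] by (simp add: iherm0_iff)
qed

lemma norm_column_unitary:
  assumes "U \<in> unitary_mats"
  shows "norm (column j U) = 1"
proof -
  have "complex_of_real ((norm (column j U))\<^sup>2) = cinner (column j U) (column j U)"
    by (rule cinner_self[symmetric])
  also have "\<dots> = (cadj U ** U)$j$j"
    by (rule cinner_columns)
  also have "\<dots> = 1"
    using unitary_matsD(2)[OF assms] by (simp add: mat_def)
  finally have "(norm (column j U))\<^sup>2 = 1"
    by (simp only: of_real_eq_1_iff)
  then show ?thesis
    using norm_ge_zero[of "column j U"] by (auto simp: power2_eq_1_iff)
qed

lemma iherm0_midpoint_if_anticommuting: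
  assumes "A \<in> iherm0" "B \<in> iherm0" "A ** B = - (B ** A)"
  shows "(1 / sqrt 2) *\<^sub>R (A + B) \<in> iherm0"
proof -
  have "(A + B) ** (A + B) = A ** A + B ** B + (A ** B + B ** A)"
    by (simp add: matrix_add_ldistrib matrix_add_rdistrib add_ac)
  also have "\<dots> = 2 *\<^sub>R mat 1"
    using assms by (simp add: iherm0_iff scaleR_2)
  finally show ?thesis
    using assms by (simp add: iherm0_iff herm0_add herm0_scaleR matrix_scaleR_right
        flip: scalar_matrix_assoc)
qed

lemma unitary_cross_terms_if_midpoint_unitary:
  assumes "U \<in> unitary_mats" "V \<in> unitary_mats" "(1 / sqrt 2) *\<^sub>R (U + V) \<in> unitary_mats"
  shows "U ** cadj V + V ** cadj U = 0" "cadj U ** V + cadj V ** U = 0"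
proof -
  let ?W = "(1 / sqrt 2) *\<^sub>R (U + V)"
  have "2 *\<^sub>R (?W ** cadj ?W) = U ** cadj U + V ** cadj V + (U ** cadj V + V ** cadj U)"
    "2 *\<^sub>R (cadj ?W ** ?W) = cadj U ** U + cadj V ** V + (cadj U ** V + cadj V ** U)"
    by (simp_all add: cadj_add cadj_scaleR matrix_add_ldistrib matrix_add_rdistrib
        matrix_scaleR_right scaleR_add_right add_ac flip: scalar_matrix_assoc)
  then show "U ** cadj V + V ** cadj U = 0" "cadj U ** V + cadj V ** U = 0"
    using assms by (simp_all add: unitary_mats_def scaleR_2)
qed

section \<open>Householder reflections\<close>

(* For v = 0 the division by zero makes this the identity matrix. *)
definition householder :: "complex^'n::finite \<Rightarrow> complex^'n^'n" where
  "householder v = mat 1 - (2 / (norm v)\<^sup>2) *\<^sub>R outer v v"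

lemma householder_unitary: "householder v \<in> unitary_mats"
proof -
  define Q where "Q = (2 / (norm v)\<^sup>2) *\<^sub>R outer v v"
  have "Q ** Q = (2 / (norm v)\<^sup>2 * (2 / (norm v)\<^sup>2 * (norm v)\<^sup>2)) *\<^sub>R outer v v"
    by (simp add: Q_def matrix_scaleR_right outer_self_square flip: scalar_matrix_assoc)
  also have "2 / (norm v)\<^sup>2 * (2 / (norm v)\<^sup>2 * (norm v)\<^sup>2) = 2 / (norm v)\<^sup>2 + 2 / (norm v)\<^sup>2"
    by (cases "v = 0") simp_all
  finally have "Q ** Q = Q + Q"
    by (simp only: Q_def scaleR_left_distrib)
  moreover have "householder v ** householder v = mat 1 - Q - (Q - Q ** Q)"
    by (simp add: householder_def Q_def[symmetric] matrix_diff_ldistrib matrix_diff_rdistrib)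
  moreover have "cadj (householder v) = householder v"
    by (simp add: householder_def cadj_diff cadj_scaleR cadj_outer)
  ultimately show ?thesis
    by (simp add: unitary_mats_def)
qed

lemma householder_mult_vec:
  "householder v *v z = z - (2 / (norm v)\<^sup>2) *\<^sub>R (cinner v z *s v)"
  by (simp add: householder_def matrix_vector_mult_diff_rdistrib scaleR_matrix_vector_mult
      outer_mult_vec)

lemma householder_reflects:
  assumes "norm x = norm y" "cinner y x = of_real t"
  shows "householder (x - y) *v x = y"
proof (cases "x = y")
  case True
  then show ?thesis
    by (simp add: householder_def)
next
  case False
  have xy: "cinner x y = of_real t"
    using assms(2) cnj_cinner[of y x] by simp
  have "complex_of_real ((norm (x - y))\<^sup>2) = cinner x x - cinner x y - cinner y x + cinner y y"
    unfolding cinner_self[symmetric] by (simp add: cinner_diff_left cinner_diff_right)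
  also have "\<dots> = of_real (2 * ((norm x)\<^sup>2 - t))"
    using assms xy by (simp add: cinner_self)
  finally have "(norm (x - y))\<^sup>2 = 2 * ((norm x)\<^sup>2 - t)"
    by (simp only: of_real_eq_iff)
  then have "2 / (norm (x - y))\<^sup>2 * ((norm x)\<^sup>2 - t) = 1"
    using False by (simp add: field_simps)
  moreover have "cinner (x - y) x = of_real ((norm x)\<^sup>2 - t)"
    using assms(2) by (simp add: cinner_diff_left cinner_self)
  ultimately have unit: "complex_of_real (2 / (norm (x - y))\<^sup>2) * cinner (x - y) x = 1"
    by (metis of_real_1 of_real_mult)
  have smult: "r *\<^sub>R (c *s v) = (complex_of_real r * c) *s v" for r c and v :: "complex^'n"
    by (simp add: vec_eq_iff scaleR_conv_of_real[where 'a=complex] mult.assoc)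
  show ?thesis
    unfolding householder_mult_vec smult unit by simp
qed

lemma exists_unitary_fixing_axis:
  assumes "norm w = 1" "w$a = 0" "a \<noteq> b"
  obtains U l where "U \<in> unitary_mats" "U *v axis a 1 = axis a 1" "U *v axis b l = w"
    "l * cnj l = 1"
proof -
  \<comment> \<open>the phase makes the complex inner product of w and l e_b real\<close>
  define l where "l = (if w$b = 0 then 1 else sgn (w$b))"
  have "cmod l = 1"
    by (simp add: l_def norm_sgn)
  then have l: "l * cnj l = 1"
    using complex_norm_square[of l] by simp
  have "cinner w (axis b l) = of_real (cmod (w$b))"
    using complex_norm_square[of "w$b"]
    by (auto simp: cinner_axis_right l_def sgn_eq power2_eq_square field_simps)
  then have "householder (axis b l - w) *v axis b l = w"
    using assms(1) \<open>cmod l = 1\<close> by (intro householder_reflects) (simp_all add: norm_axis)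
  moreover have "cinner (axis b l - w) (axis a 1) = 0"
    using assms(2,3) by (simp add: cinner_axis_right) (simp add: axis_def)
  then have "householder (axis b l - w) *v axis a 1 = axis a 1"
    by (simp add: householder_mult_vec)
  ultimately show ?thesis
    using that householder_unitary l by blast
qed

section \<open>Test matrices in IH_n^0\<close>

definition monomial_mat :: "('n::finite \<Rightarrow> 'n) \<Rightarrow> ('n \<Rightarrow> complex) \<Rightarrow> complex^'n^'n" where
  "monomial_mat p w = (\<chi> i j. if j = p i then w i else 0)"

lemma monomial_mat_mult:
  "monomial_mat p w ** monomial_mat q v = monomial_mat (q \<circ> p) (\<lambda>i. w i * v (p i))"
proof -
  have "(\<Sum>l\<in>UNIV. (if l = p i then w i else 0) * (if j = q l then v l else 0)) =
        (if j = q (p i) then w i * v (p i) else 0)" for i j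
    by (simp add: if_distrib[of "\<lambda>x. x * _"] cong: if_cong)
  then show ?thesis
    by (simp add: monomial_mat_def matrix_matrix_mult_def vec_eq_iff)
qed

lemma monomial_mat_uminus: "monomial_mat p (\<lambda>i. - w i) = - monomial_mat p w"
  by (simp add: monomial_mat_def vec_eq_iff)

lemma mat_1_eq_monomial_mat: "mat 1 = monomial_mat id (\<lambda>_. 1)"
  by (simp add: monomial_mat_def mat_def vec_eq_iff)

lemma monomial_mat_iherm0:
  assumes inv: "\<And>i. p (p i) = i" and herm: "\<And>i. w (p i) = cnj (w i)"
    and unit: "\<And>i. w i * cnj (w i) = 1"
    and trace: "(\<Sum>i\<in>UNIV. if p i = i then w i else 0) = 0"
  shows "monomial_mat p w \<in> iherm0"
proof -
  have "cadj (monomial_mat p w) = monomial_mat p w"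
    using inv herm by (auto simp: cadj_def monomial_mat_def vec_eq_iff)
  moreover have "trace (monomial_mat p w) = 0"
    using trace by (simp add: trace_def monomial_mat_def eq_commute[of "p _"])
  moreover have "p \<circ> p = id" "(\<lambda>i. w i * w (p i)) = (\<lambda>_. 1)"
    using inv herm unit by auto
  then have "monomial_mat p w ** monomial_mat p w = mat 1"
    by (simp add: monomial_mat_mult mat_1_eq_monomial_mat)
  ultimately show ?thesis
    by (simp add: iherm0_iff herm0_def)
qed

definition diag_mat :: "('n::finite \<Rightarrow> real) \<Rightarrow> complex^'n^'n" where
  "diag_mat d = monomial_mat id (\<lambda>i. of_real (d i))"

lemma diag_mat_add: "diag_mat (\<lambda>x. d x + e x) = diag_mat d + diag_mat e"
  by (simp add: diag_mat_def monomial_mat_def vec_eq_iff)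

lemma diag_mat_scaleR: "diag_mat (\<lambda>x. c * d x) = c *\<^sub>R diag_mat d"
  by (simp add: diag_mat_def monomial_mat_def vec_eq_iff scaleR_conv_of_real[where 'a=complex])

lemma diag_mat_sum: "diag_mat (\<lambda>x. \<Sum>y\<in>S. f y x) = (\<Sum>y\<in>S. diag_mat (f y))"
  by (induction S rule: infinite_finite_induct)
    (auto simp: diag_mat_def monomial_mat_def vec_eq_iff sum_component)

lemma diag_mat_herm0: "sum d UNIV = 0 \<Longrightarrow> diag_mat d \<in> herm0"
  by (simp add: herm0_def diag_mat_def cadj_def monomial_mat_def trace_def vec_eq_iff
      flip: of_real_sum)

(* Diagonals that complete a matrix supported on S x S to an element of IH_n^0. *)
definition balanced_signs :: "'n::finite set \<Rightarrow> ('n \<Rightarrow> real) \<Rightarrow> bool" where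
  "balanced_signs S r \<longleftrightarrow>
     (\<forall>x\<in>S. r x = 0) \<and> (\<forall>x. x \<notin> S \<longrightarrow> r x = 1 \<or> r x = -1) \<and> sum r UNIV = 0"

lemma balanced_signs_exists:
  fixes S :: "'n::finite set"
  assumes "even (CARD('n) - card S)"
  obtains r where "balanced_signs S r"
proof -
  let ?C = "UNIV - S"
  obtain H where H: "H \<subseteq> ?C" "card H = card ?C div 2"
    using obtain_subset_with_card_n[of "card ?C div 2" ?C] by auto
  have "card ?C = CARD('n) - card S" "card S \<le> CARD('n)"
    by (simp_all add: card_Diff_subset card_mono)
  then have "card (?C - H) = card ?C div 2"
    using H assms by (simp add: card_Diff_subset) presburger
  then have "(\<Sum>x\<in>UNIV. of_bool (x \<in> H) - of_bool (x \<in> ?C - H) :: real) = 0"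
    using H by (simp add: sum_subtractf of_bool_def sum.If_cases set_diff_eq)
  moreover have "of_bool (x \<in> H) - of_bool (x \<in> ?C - H) = (0::real)" if "x \<in> S" for x
    using H that by auto
  ultimately show ?thesis
    by (intro that[of "\<lambda>x. of_bool (x \<in> H) - of_bool (x \<in> ?C - H)"])
      (auto simp: balanced_signs_def)
qed

lemma diag_mat_iherm0:
  assumes "balanced_signs {} s"
  shows "diag_mat s \<in> iherm0"
  unfolding diag_mat_def
proof (rule monomial_mat_iherm0)
  fix i
  have "s i = 1 \<or> s i = -1"
    using assms by (simp add: balanced_signs_def)
  then show "of_real (s i) * cnj (of_real (s i)) = (1::complex)"
    by auto
  show "(\<Sum>i\<in>UNIV. if id i = i then complex_of_real (s i) else 0) = 0"
    using assms by (simp add: balanced_signs_def flip: of_real_sum)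
qed auto

lemma balanced_signs_remove_pair:
  assumes "balanced_signs S r" "a \<in> S" "b \<in> S" "a \<noteq> b" "e = 1 \<or> e = -1"
  shows "balanced_signs (S - {a,b}) (\<lambda>x. e * (of_bool (x = a) - of_bool (x = b)) + r x)"
  using assms unfolding balanced_signs_def
proof (intro conjI allI ballI impI)
  show "(\<Sum>x\<in>UNIV. e * (of_bool (x = a) - of_bool (x = b)) + r x) = 0"
    using assms(1) by (simp add: balanced_signs_def sum.distrib sum_subtractf flip: sum_distrib_left)
qed auto

definition diag_unit_diff :: "'n::finite \<Rightarrow> 'n \<Rightarrow> complex^'n^'n" where
  "diag_unit_diff a b = diag_mat (\<lambda>x. of_bool (x = a) - of_bool (x = b))"

lemma diag_unit_diff_herm0: "diag_unit_diff a b \<in> herm0"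
  unfolding diag_unit_diff_def by (rule diag_mat_herm0) (simp add: sum_subtractf)

lemma diag_unit_diff_swap: "diag_unit_diff b a = - diag_unit_diff a b"
  by (simp add: diag_unit_diff_def diag_mat_def monomial_mat_def vec_eq_iff)

lemma diag_unit_diff_eq_diff: "diag_unit_diff x y = diag_unit_diff x z - diag_unit_diff y z"
  by (simp add: diag_unit_diff_def diag_mat_def monomial_mat_def vec_eq_iff)

lemma diag_mat_add_diag_unit_diff:
  "diag_mat (\<lambda>x. e * (of_bool (x = a) - of_bool (x = b)) + r x) = e *\<^sub>R diag_unit_diff a b + diag_mat r"
  by (simp add: diag_mat_add diag_mat_scaleR diag_unit_diff_def)

lemma diag_mat_eq_sum_diag_unit_diff:
  assumes "sum d UNIV = 0"
  shows "diag_mat d = (\<Sum>x\<in>UNIV - {z}. d x *\<^sub>R diag_unit_diff x z)"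
proof -
  have "d i = (\<Sum>x\<in>UNIV - {z}. d x * (of_bool (i = x) - of_bool (i = z)))" for i
    using assms sum.remove[of UNIV z d]
    by (auto simp: right_diff_distrib sum_subtractf simp flip: sum_distrib_right)
  then have "d = (\<lambda>i. \<Sum>x\<in>UNIV - {z}. d x * (of_bool (i = x) - of_bool (i = z)))"
    by (rule ext)
  then have "diag_mat d = diag_mat (\<lambda>i. \<Sum>x\<in>UNIV - {z}. d x * (of_bool (i = x) - of_bool (i = z)))"
    by (rule arg_cong)
  also have "\<dots> = (\<Sum>x\<in>UNIV - {z}. d x *\<^sub>R diag_unit_diff x z)"
    by (simp add: diag_mat_sum diag_mat_scaleR diag_unit_diff_def)
  finally show ?thesis .
qed

lemma sym_outer_axis_herm0:
  assumes "w$a = 0"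
  shows "sym_outer (axis a 1) w \<in> herm0"
proof -
  have "trace (sym_outer (axis a 1) w) = cnj (w$a) + w$a"
    by (simp add: trace_def sym_outer_def outer_def axis_def if_distrib if_distribR cong: if_cong)
  then show ?thesis
    using assms by (simp add: herm0_def sym_outer_def cadj_add cadj_outer add.commute)
qed

lemma sym_outer_axis_plus_diag_iherm0:
  assumes "a \<noteq> b" "balanced_signs {a,b} r" "l * cnj l = 1"
  shows "sym_outer (axis a 1) (axis b l) + diag_mat r \<in> iherm0"
proof -
  define w where "w x = (if x = a then cnj l else if x = b then l else of_real (r x))" for x
  have "sym_outer (axis a 1) (axis b l) + diag_mat r = monomial_mat (id(a := b, b := a)) w"
    using assms by (auto simp: sym_outer_def outer_def diag_mat_def monomial_mat_def axis_def
        w_def vec_eq_iff balanced_signs_def)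
  also have "\<dots> \<in> iherm0"
  proof (rule monomial_mat_iherm0)
    have "x \<noteq> a \<Longrightarrow> x \<noteq> b \<Longrightarrow> r x * r x = 1" for x
      using assms(2) by (auto simp: balanced_signs_def)
    then show "w x * cnj (w x) = 1" for x
      using assms(3) by (auto simp: w_def mult.commute simp flip: of_real_mult)
    have "(\<Sum>x\<in>UNIV. if (id(a := b, b := a)) x = x then w x else 0) = (\<Sum>x\<in>UNIV. of_real (r x))"
      using assms(1,2) by (intro sum.cong) (auto simp: w_def balanced_signs_def)
    then show "(\<Sum>x\<in>UNIV. if (id(a := b, b := a)) x = x then w x else 0) = 0"
      using assms(2) by (simp add: balanced_signs_def flip: of_real_sum)
  qed (use assms in \<open>auto simp: w_def\<close>)
  finally show ?thesis .
qed

definition diag_spike :: "'n::finite \<Rightarrow> complex^'n^'n" where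
  "diag_spike a = diag_mat (\<lambda>x. real CARD('n) * of_bool (x = a) - 1)"

lemma sum_diag_spike_entries: "(\<Sum>x\<in>UNIV. real CARD('n) * of_bool (x = a) - 1) = 0"
  for a :: "'n::finite"
  by (simp add: sum_subtractf)

lemma unitary_conj_diag_spike:
  fixes U :: "complex^'n::finite^'n"
  assumes "U \<in> unitary_mats" "U *v axis a 1 = axis a 1"
  shows "U ** diag_spike a ** cadj U = diag_spike a"
proof -
  have spike: "diag_spike a = real CARD('n) *\<^sub>R outer (axis a 1) (axis a 1) - mat 1"
    by (auto simp: diag_spike_def diag_mat_def monomial_mat_def outer_def axis_def mat_def
        vec_eq_iff scaleR_conv_of_real[where 'a=complex])
  show ?thesis
    unfolding spike using assms(2) unitary_matsD(1)[OF assms(1)]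
    by (simp add: matrix_diff_ldistrib matrix_diff_rdistrib matrix_scaleR_right outer_congruence
        flip: scalar_matrix_assoc)
qed

section \<open>Real-linear maps sending IH_n^0 to unit vectors\<close>

lemma unit_sum_diff_orthogonal:
  fixes p q :: "'a::real_inner"
  assumes "norm (q + p) = 1" "norm (q - p) = 1"
  shows "inner p q = 0" "(norm p)\<^sup>2 + (norm q)\<^sup>2 = 1"
proof -
  have "(norm (q + p))\<^sup>2 = (norm p)\<^sup>2 + 2 * inner p q + (norm q)\<^sup>2"
    "(norm (q - p))\<^sup>2 = (norm p)\<^sup>2 - 2 * inner p q + (norm q)\<^sup>2"
    by (simp_all add: power2_norm_eq_inner inner_add_left inner_add_right inner_diff_left
        inner_diff_right inner_commute)
  with assms show "inner p q = 0" "(norm p)\<^sup>2 + (norm q)\<^sup>2 = 1"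
    by auto
qed

lemma four_point_excess_indep:
  fixes c :: "'a \<Rightarrow> 'a \<Rightarrow> real"
  assumes sym: "\<And>x y. c x y = c y x"
    and four_point: "\<And>x y z w. distinct [x, y, z, w] \<Longrightarrow> c x y + c z w = c x z + c y w"
    and "distinct [x, y, z]" "distinct [x, y', z']"
  shows "c x y + c x z - c y z = c x y' + c x z' - c y' z'"
proof -
  define f where "f y z = c x y + c x z - c y z" for y z
  have swap: "f y z = f z y" for y z
    by (simp add: f_def sym)
  have replace: "f y z = f y z'" if "distinct [x, y, z]" "distinct [x, y, z']" for y z z'
    using that four_point[of x z z' y] by (cases "z = z'") (auto simp: f_def sym)
  consider "y' = y" | "y' = z" | "y' \<noteq> y" "y' \<noteq> z"
    by blast
  then have "f y z = f y' z'"
  proof cases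
    case 1
    then show ?thesis
      using assms(3,4) replace[of y z z'] by simp
  next
    case 2
    have "f y z = f z y"
      by (rule swap)
    also have "\<dots> = f z z'"
      using assms(3,4) 2 by (intro replace) auto
    finally show ?thesis
      using 2 by simp
  next
    case 3
    have "f y z = f y y'"
      using assms(3,4) 3 by (intro replace) auto
    also have "\<dots> = f y' y"
      by (rule swap)
    also have "\<dots> = f y' z'"
      using assms(3,4) 3 by (intro replace) auto
    finally show ?thesis .
  qed
  then show ?thesis
    by (simp add: f_def)
qed

lemma additive_if_four_point:
  fixes c :: "'a \<Rightarrow> 'a \<Rightarrow> real"
  assumes sym: "\<And>x y. c x y = c y x"
    and four_point: "\<And>x y z w. distinct [x, y, z, w] \<Longrightarrow> c x y + c z w = c x z + c y w"
    and third: "\<And>x y :: 'a. \<exists>z. z \<noteq> x \<and> z \<noteq> y"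
  obtains \<mu> where "\<And>x y. x \<noteq> y \<Longrightarrow> c x y = \<mu> x + \<mu> y"
proof -
  have "\<exists>p. distinct [x, fst p, snd p]" for x :: 'a
  proof -
    obtain y where "y \<noteq> x"
      using third[of x x] by blast
    moreover obtain z where "z \<noteq> x" "z \<noteq> y"
      using third[of x y] by blast
    ultimately show ?thesis
      by (intro exI[of _ "(y, z)"]) auto
  qed
  then have "\<exists>p. \<forall>x::'a. distinct [x, fst (p x), snd (p x)]"
    by (intro choice allI)
  then obtain p where p: "\<And>x::'a. distinct [x, fst (p x), snd (p x)]"
    by blast
  define \<mu> where "\<mu> x = (c x (fst (p x)) + c x (snd (p x)) - c (fst (p x)) (snd (p x))) / 2" for x
  show ?thesis
  proof
    fix x y :: 'a
    assume "x \<noteq> y"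
    moreover obtain z where "z \<noteq> x" "z \<noteq> y"
      using third by blast
    ultimately have "\<mu> x = (c x y + c x z - c y z) / 2" "\<mu> y = (c y x + c y z - c x z) / 2"
      using four_point_excess_indep[of c, OF sym four_point p[of x], where y' = y and z' = z]
        four_point_excess_indep[of c, OF sym four_point p[of y], where y' = x and z' = z]
      by (auto simp: \<mu>_def)
    then show "c x y = \<mu> x + \<mu> y"
      by (simp add: sym field_simps)
  qed
qed

lemma power2_norm_sum_scaleR:
  fixes v :: "'b \<Rightarrow> 'a::real_inner"
  shows "(norm (\<Sum>x\<in>A. d x *\<^sub>R v x))\<^sup>2 = (\<Sum>x\<in>A. \<Sum>y\<in>A. d x * d y * inner (v x) (v y))"
  by (simp add: power2_norm_eq_inner inner_sum_left inner_sum_right sum_distrib_left mult_ac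
      inner_commute)

lemma sum_sum_rank_one_plus_diagonal:
  fixes d \<mu> :: "'a \<Rightarrow> 'b::comm_semiring_1"
  assumes "finite A"
  shows "(\<Sum>x\<in>A. \<Sum>y\<in>A. d x * d y * (m + (if x = y then \<mu> x else 0))) =
    m * (sum d A)\<^sup>2 + (\<Sum>x\<in>A. \<mu> x * (d x)\<^sup>2)"
proof -
  have "d x * d y * (m + (if x = y then \<mu> x else 0)) =
      m * (d x * d y) + (if x = y then \<mu> x * (d x)\<^sup>2 else 0)" for x y
    by (cases "x = y") (simp_all add: algebra_simps power2_eq_square)
  then have "(\<Sum>x\<in>A. \<Sum>y\<in>A. d x * d y * (m + (if x = y then \<mu> x else 0))) =
      (\<Sum>x\<in>A. \<Sum>y\<in>A. m * (d x * d y)) + (\<Sum>x\<in>A. \<mu> x * (d x)\<^sup>2)"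
    using assms by (simp add: sum.distrib)
  also have "(\<Sum>x\<in>A. \<Sum>y\<in>A. m * (d x * d y)) = m * (sum d A)\<^sup>2"
    by (simp add: power2_eq_square sum_product flip: sum_distrib_left)
  finally show ?thesis .
qed

locale unit_norm_on_iherm0 =
  fixes T :: "complex^'n::finite^'n \<Rightarrow> 'v::real_inner"
  assumes even_card: "even CARD('n)"
    and add: "A \<in> herm0 \<Longrightarrow> B \<in> herm0 \<Longrightarrow> T (A + B) = T A + T B"
    and scaleR: "A \<in> herm0 \<Longrightarrow> T (r *\<^sub>R A) = r *\<^sub>R T A"
    and norm_iherm0: "A \<in> iherm0 \<Longrightarrow> norm (T A) = 1"
begin

lemma uminus: "A \<in> herm0 \<Longrightarrow> T (- A) = - T A"
  using scaleR[of A "-1"] by simp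

lemma diff: "A \<in> herm0 \<Longrightarrow> B \<in> herm0 \<Longrightarrow> T (A - B) = T A - T B"
  using add[of A "- B"] uminus[of B] herm0_scaleR[of B "-1"] by simp

lemma zero: "T 0 = 0"
  using scaleR[OF herm0_zero, of 0] by simp

lemma sum: "(\<And>x. x \<in> S \<Longrightarrow> f x \<in> herm0) \<Longrightarrow> T (sum f S) = (\<Sum>x\<in>S. T (f x))"
  by (induction S rule: infinite_finite_induct) (simp_all add: zero add herm0_sum)

lemma orthogonal_if_add_diff_iherm0:
  assumes "A \<in> herm0" "B \<in> herm0" "B + A \<in> iherm0" "B - A \<in> iherm0"
  shows "inner (T A) (T B) = 0" "(norm (T A))\<^sup>2 + (norm (T B))\<^sup>2 = 1"
proof -
  have "norm (T B + T A) = 1" "norm (T B - T A) = 1"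
    using assms by (simp_all add: add[symmetric] diff[symmetric] norm_iherm0)
  then show "inner (T A) (T B) = 0" "(norm (T A))\<^sup>2 + (norm (T B))\<^sup>2 = 1"
    by (rule unit_sum_diff_orthogonal)+
qed

lemma obtain_balanced_signs:
  fixes S :: "'n set"
  assumes "even (card S)"
  obtains r where "balanced_signs S r"
proof -
  have "even (CARD('n) - card S)"
    using even_card assms by simp
  then show ?thesis
    using balanced_signs_exists[of S] that by blast
qed

definition pair_weight :: "'n \<Rightarrow> 'n \<Rightarrow> real" where
  "pair_weight a b = (norm (T (diag_unit_diff a b)))\<^sup>2"

lemma pair_weight_sym: "pair_weight a b = pair_weight b a"
  by (simp add: pair_weight_def diag_unit_diff_swap[of a b] uminus diag_unit_diff_herm0)

lemma pair_weight_add_balanced: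
  assumes "a \<noteq> b" "balanced_signs {a,b} r"
  shows "inner (T (diag_unit_diff a b)) (T (diag_mat r)) = 0"
    "pair_weight a b + (norm (T (diag_mat r)))\<^sup>2 = 1"
proof -
  have bal: "balanced_signs {} (\<lambda>x. e * (of_bool (x = a) - of_bool (x = b)) + r x)"
    if "e = 1 \<or> e = -1" for e
    using balanced_signs_remove_pair[OF assms(2), of a b e] assms(1) that by simp
  have iherm0: "diag_mat r + e *\<^sub>R diag_unit_diff a b \<in> iherm0" if "e = 1 \<or> e = -1" for e
    using diag_mat_iherm0[OF bal[OF that]]
    by (simp only: diag_mat_add_diag_unit_diff) (simp add: add.commute)
  have "diag_mat r \<in> herm0"
    using assms(2) by (simp add: diag_mat_herm0 balanced_signs_def)
  moreover have "diag_mat r + diag_unit_diff a b \<in> iherm0" "diag_mat r - diag_unit_diff a b \<in> iherm0"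
    using iherm0[of 1] iherm0[of "-1"] by simp_all
  ultimately show "inner (T (diag_unit_diff a b)) (T (diag_mat r)) = 0"
    "pair_weight a b + (norm (T (diag_mat r)))\<^sup>2 = 1"
    using orthogonal_if_add_diff_iherm0[OF diag_unit_diff_herm0] by (simp_all add: pair_weight_def)
qed

lemma pair_weights_add_balanced:
  assumes "distinct [a, b, c, d]" "balanced_signs {a,b,c,d} r"
  shows "pair_weight a b + pair_weight c d + (norm (T (diag_mat r)))\<^sup>2 = 1"
proof -
  let ?R = "T (diag_mat r)"
  have shift: "T (diag_mat (\<lambda>x. e * (of_bool (x = p) - of_bool (x = q)) + r x)) =
      e *\<^sub>R T (diag_unit_diff p q) + ?R" for e p q
    using assms(2) by (simp add: diag_mat_add_diag_unit_diff add scaleR herm0_scaleR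
        diag_unit_diff_herm0 diag_mat_herm0 balanced_signs_def)
  have sets: "{a,b,c,d} - {c,d} = {a,b}" "{a,b,c,d} - {a,b} = {c,d}"
    using assms(1) by auto
  have bal_ab: "balanced_signs {a,b} (\<lambda>x. 1 * (of_bool (x = c) - of_bool (x = d)) + r x)"
    using balanced_signs_remove_pair[OF assms(2), of c d 1, unfolded sets(1)] assms(1) by simp
  have bal_cd: "balanced_signs {c,d} (\<lambda>x. e * (of_bool (x = a) - of_bool (x = b)) + r x)"
    if "e = 1 \<or> e = -1" for e
    using balanced_signs_remove_pair[OF assms(2), of a b e, unfolded sets(2)] assms(1) that by simp
  have "pair_weight a b + (norm (T (diag_unit_diff c d) + ?R))\<^sup>2 = 1"
    using pair_weight_add_balanced(2)[OF _ bal_ab] shift[of 1 c d] assms(1) by simp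
  moreover have orth: "inner (T (diag_unit_diff c d)) (e *\<^sub>R T (diag_unit_diff a b) + ?R) = 0"
    if "e = 1 \<or> e = -1" for e
    using pair_weight_add_balanced(1)[OF _ bal_cd[OF that]] shift[of e a b] assms(1) by simp
  from orth[of 1] orth[of "-1"] have "inner (T (diag_unit_diff c d)) ?R = 0"
    by (simp add: inner_add_right inner_diff_right)
  ultimately show ?thesis
    by (simp add: pair_weight_def power2_norm_eq_inner inner_add_left inner_add_right inner_commute)
qed

lemma pair_weight_four_point:
  assumes "distinct [a, b, c, d]"
  shows "pair_weight a b + pair_weight c d = pair_weight a c + pair_weight b d"
proof -
  have "card {a,b,c,d} = 4"
    using assms by auto
  then obtain r where r: "balanced_signs {a,b,c,d} r"
    by (metis obtain_balanced_signs even_numeral)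
  have "balanced_signs {a,c,b,d} r"
    using r by (simp add: insert_commute)
  then show ?thesis
    using pair_weights_add_balanced[OF _ r] pair_weights_add_balanced[of a c b d r] assms by auto
qed

lemma pair_weight_additive:
  assumes "4 \<le> CARD('n)"
  obtains \<mu> where "\<And>a b. a \<noteq> b \<Longrightarrow> pair_weight a b = \<mu> a + \<mu> b"
proof (rule additive_if_four_point[of pair_weight])
  show "\<exists>z. z \<noteq> x \<and> z \<noteq> y" for x y :: 'n
  proof -
    have "card {x, y} \<le> 2"
      by (cases "x = y") simp_all
    then have "card {x, y} < CARD('n)"
      using assms by simp
    then have "UNIV \<noteq> {x, y}"
      by auto
    then show ?thesis
      by auto
  qed
qed (use pair_weight_sym pair_weight_four_point that in auto)

lemma norm_diag_mat_squared:
  assumes mu: "\<And>a b. a \<noteq> b \<Longrightarrow> pair_weight a b = \<mu> a + \<mu> b" and d: "sum d UNIV = 0"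
  shows "(norm (T (diag_mat d)))\<^sup>2 = (\<Sum>x\<in>UNIV. \<mu> x * (d x)\<^sup>2)"
proof -
  obtain z :: 'n where True by simp
  let ?R = "UNIV - {z}" and ?v = "\<lambda>x. T (diag_unit_diff x z)"
  have T_diag: "T (diag_mat d) = (\<Sum>x\<in>?R. d x *\<^sub>R ?v x)"
    unfolding diag_mat_eq_sum_diag_unit_diff[OF d, of z]
    by (simp add: sum herm0_scaleR diag_unit_diff_herm0 scaleR)
  have inner: "inner (?v x) (?v y) = \<mu> z + (if x = y then \<mu> x else 0)"
    if "x \<in> ?R" "y \<in> ?R" for x y
  proof (cases "x = y")
    case True
    then show ?thesis
      using that mu[of x z] by (simp add: pair_weight_def power2_norm_eq_inner)
  next
    case False
    have "pair_weight x y = (norm (?v x - ?v y))\<^sup>2"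
      by (simp add: pair_weight_def diag_unit_diff_eq_diff[of x y z] diff diag_unit_diff_herm0)
    then show ?thesis
      using that False mu[of x y] mu[of x z] mu[of y z]
      by (simp add: pair_weight_def power2_norm_eq_inner inner_diff_left inner_diff_right
          inner_commute)
  qed
  have "(norm (T (diag_mat d)))\<^sup>2 = (\<Sum>x\<in>?R. \<Sum>y\<in>?R. d x * d y * inner (?v x) (?v y))"
    unfolding T_diag by (rule power2_norm_sum_scaleR)
  also have "\<dots> = (\<Sum>x\<in>?R. \<Sum>y\<in>?R. d x * d y * (\<mu> z + (if x = y then \<mu> x else 0)))"
    using inner by (intro sum.cong refl) simp
  also have "\<dots> = \<mu> z * (sum d ?R)\<^sup>2 + (\<Sum>x\<in>?R. \<mu> x * (d x)\<^sup>2)"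
    by (rule sum_sum_rank_one_plus_diagonal) simp
  also have "sum d ?R = - d z"
    using d sum.remove[of UNIV z d] by simp
  also have "\<mu> z * (- d z)\<^sup>2 + (\<Sum>x\<in>?R. \<mu> x * (d x)\<^sup>2) = (\<Sum>x\<in>UNIV. \<mu> x * (d x)\<^sup>2)"
    using sum.remove[of UNIV z "\<lambda>x. \<mu> x * (d x)\<^sup>2"] by simp
  finally show ?thesis .
qed

(* mu_a solved from |T (n E_aa - I)|^2 = n (n - 2) mu_a + 1,
   see point_weight_eq_if_pair_weight_additive. *)
definition point_weight :: "'n \<Rightarrow> real" where
  "point_weight a = ((norm (T (diag_spike a)))\<^sup>2 - 1) / (real CARD('n) * (real CARD('n) - 2))"

lemma sum_eq_1_if_pair_weight_additive:
  assumes "\<And>a b. a \<noteq> b \<Longrightarrow> pair_weight a b = \<mu> a + \<mu> b"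
  shows "sum \<mu> UNIV = 1"
proof -
  obtain s :: "'n \<Rightarrow> real" where s: "balanced_signs {} s"
    using obtain_balanced_signs[of "{}"] by auto
  have sq: "(s x)\<^sup>2 = 1" for x
  proof -
    have "s x = 1 \<or> s x = -1"
      using s by (simp add: balanced_signs_def)
    then show ?thesis
      by auto
  qed
  have "sum s UNIV = 0"
    using s by (simp add: balanced_signs_def)
  have "1 = (norm (T (diag_mat s)))\<^sup>2"
    using norm_iherm0[OF diag_mat_iherm0[OF s]] by simp
  also have "\<dots> = (\<Sum>x\<in>UNIV. \<mu> x * (s x)\<^sup>2)"
    using norm_diag_mat_squared[OF assms \<open>sum s UNIV = 0\<close>] .
  finally show ?thesis
    by (simp add: sq)
qed

lemma point_weight_eq_if_pair_weight_additive:
  assumes "4 \<le> CARD('n)" "\<And>a b. a \<noteq> b \<Longrightarrow> pair_weight a b = \<mu> a + \<mu> b"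
  shows "point_weight a = \<mu> a"
proof -
  let ?n = "real CARD('n)"
  have "(norm (T (diag_spike a)))\<^sup>2 = (\<Sum>x\<in>UNIV. \<mu> x * (?n * of_bool (x = a) - 1)\<^sup>2)"
    unfolding diag_spike_def by (rule norm_diag_mat_squared[OF assms(2) sum_diag_spike_entries])
  also have "\<dots> = (\<Sum>x\<in>UNIV. \<mu> x + (if x = a then ?n * (?n - 2) * \<mu> a else 0))"
    by (intro sum.cong) (auto simp: algebra_simps power2_eq_square)
  also have "\<dots> = ?n * (?n - 2) * \<mu> a + 1"
    using sum_eq_1_if_pair_weight_additive[OF assms(2)] by (simp add: sum.distrib)
  finally show ?thesis
    using assms(1) by (simp add: point_weight_def)
qed

lemma point_weight_additive:
  assumes "4 \<le> CARD('n)"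
  shows "a \<noteq> b \<Longrightarrow> pair_weight a b = point_weight a + point_weight b"
    and "sum point_weight UNIV = 1"
proof -
  obtain \<mu> where \<mu>: "\<And>a b. a \<noteq> b \<Longrightarrow> pair_weight a b = \<mu> a + \<mu> b"
    using pair_weight_additive[OF assms] by blast
  moreover have "point_weight = \<mu>"
    using point_weight_eq_if_pair_weight_additive[OF assms \<mu>] by blast
  ultimately show "a \<noteq> b \<Longrightarrow> pair_weight a b = point_weight a + point_weight b"
    and "sum point_weight UNIV = 1"
    using sum_eq_1_if_pair_weight_additive by auto
qed

lemma unitary_conj:
  assumes "U \<in> unitary_mats"
  shows "unit_norm_on_iherm0 (\<lambda>A. T (U ** A ** cadj U))"
proof
  fix A B :: "complex^'n^'n" and r :: real
  assume "A \<in> herm0" "B \<in> herm0"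
  then show "T (U ** (A + B) ** cadj U) = T (U ** A ** cadj U) + T (U ** B ** cadj U)"
    using assms by (simp add: matrix_add_ldistrib matrix_add_rdistrib add unitary_conj_herm0)
  show "T (U ** (r *\<^sub>R A) ** cadj U) = r *\<^sub>R T (U ** A ** cadj U)"
    using assms \<open>A \<in> herm0\<close>
    by (simp add: matrix_scaleR_right scaleR unitary_conj_herm0 flip: scalar_matrix_assoc)
next
  fix A :: "complex^'n^'n"
  assume "A \<in> iherm0"
  then show "norm (T (U ** A ** cadj U)) = 1"
    using assms by (simp add: unitary_conj_iherm0 norm_iherm0)
qed (rule even_card)

lemma norm_sym_outer_axis_squared:
  assumes "a \<noteq> b" "l * cnj l = 1"
  shows "(norm (T (sym_outer (axis a 1) (axis b l))))\<^sup>2 = pair_weight a b"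
proof -
  let ?O = "sym_outer (axis a 1) (axis b l)"
  have "card {a, b} = 2"
    using assms by simp
  then obtain r where r: "balanced_signs {a, b} r"
    by (metis obtain_balanced_signs even_numeral)
  have "?O \<in> herm0"
    using assms(1) by (intro sym_outer_axis_herm0) (simp add: axis_def)
  moreover have "diag_mat r \<in> herm0"
    using r by (simp add: diag_mat_herm0 balanced_signs_def)
  moreover have "sym_outer (axis a 1) (axis b (- l)) = - ?O"
    by (simp add: sym_outer_def outer_def axis_def vec_eq_iff)
  then have "diag_mat r + ?O \<in> iherm0" "diag_mat r - ?O \<in> iherm0"
    using sym_outer_axis_plus_diag_iherm0[OF assms(1) r assms(2)]
      sym_outer_axis_plus_diag_iherm0[OF assms(1) r, of "- l"] assms(2)
    by (simp_all add: add.commute)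
  ultimately have "(norm (T ?O))\<^sup>2 + (norm (T (diag_mat r)))\<^sup>2 = 1"
    by (rule orthogonal_if_add_diff_iherm0(2))
  then show ?thesis
    using pair_weight_add_balanced(2)[OF assms(1) r] by simp
qed

lemma point_weight_lower_bound:
  assumes "4 \<le> CARD('n)"
  shows "- 1 / (real CARD('n) * (real CARD('n) - 2)) \<le> point_weight b"
  unfolding point_weight_def using assms by (intro divide_right_mono) auto

lemma max_point_weight_lower_bound:
  assumes "4 \<le> CARD('n)" "\<And>x. point_weight x \<le> point_weight a"
  shows "1 / real CARD('n) \<le> point_weight a"
proof -
  have "1 \<le> real CARD('n) * point_weight a"
    using sum_mono[of UNIV point_weight "\<lambda>_. point_weight a"] assms(2)
      point_weight_additive(2)[OF assms(1)] by simp
  then show ?thesis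
    by (simp add: field_simps)
qed

lemma point_weight_upper_bound_if_kernel:
  assumes n: "4 \<le> CARD('n)" and "w \<noteq> 0" "w$a = 0" "T (sym_outer (axis a 1) w) = 0"
  shows "point_weight a \<le> 1 / (real CARD('n) * (real CARD('n) - 2))"
proof -
  define u where "u = (1 / norm w) *\<^sub>R w"
  have u: "norm u = 1" "u$a = 0" "T (sym_outer (axis a 1) u) = 0"
    using assms(2-4) by (simp_all add: u_def sym_outer_scaleR scaleR sym_outer_axis_herm0)
  have "\<not> UNIV \<subseteq> {a}"
    using n card_mono[of "{a}" UNIV] by auto
  then obtain b where "b \<noteq> a"
    by auto
  then have "a \<noteq> b"
    by simp
  then obtain U l where U: "U \<in> unitary_mats" "U *v axis a 1 = axis a 1" "U *v axis b l = u"
    "l * cnj l = 1"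
    using exists_unitary_fixing_axis[OF u(1,2)] by metis
  interpret conj: unit_norm_on_iherm0 "\<lambda>A. T (U ** A ** cadj U)"
    by (rule unitary_conj[OF U(1)])
  have "conj.pair_weight a b = 0"
    using conj.norm_sym_outer_axis_squared[OF \<open>a \<noteq> b\<close> U(4)] U(2,3) u(3)
    by (simp add: sym_outer_congruence)
  moreover have "conj.point_weight a = point_weight a"
    using U(1,2) by (simp add: conj.point_weight_def point_weight_def unitary_conj_diag_spike)
  ultimately have "conj.point_weight b = - point_weight a"
    using conj.point_weight_additive(1)[OF n \<open>a \<noteq> b\<close>] by simp
  then show ?thesis
    using conj.point_weight_lower_bound[OF n, of b] by simp
qed

lemma sym_outer_axis_kernel:
  assumes n: "4 \<le> CARD('n)" and "\<And>x. point_weight x \<le> point_weight a"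
    and "w$a = 0" and "T (sym_outer (axis a 1) w) = 0"
  shows "w = 0"
proof (rule ccontr)
  let ?n = "real CARD('n)"
  assume "w \<noteq> 0"
  then have "1 / ?n \<le> 1 / (?n * (?n - 2))"
    using max_point_weight_lower_bound[OF n assms(2)]
      point_weight_upper_bound_if_kernel[OF n _ assms(3,4)] by fastforce
  moreover have "?n * 1 < ?n * (?n - 2)"
    using n by (intro mult_strict_left_mono) auto
  then have "1 / (?n * (?n - 2)) < 1 / (?n * 1)"
    using n by (intro divide_strict_left_mono) auto
  ultimately show False
    by simp
qed

lemma exists_inj_linear_into_prod:
  assumes "4 \<le> CARD('n)"
  obtains L :: "complex^'n \<Rightarrow> 'v \<times> complex" where "linear L" "inj L"
proof -
  have "Max (range point_weight) \<in> range point_weight"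
    by (rule Max_in) auto
  then obtain a where a: "Max (range point_weight) = point_weight a"
    by (rule rangeE)
  have max: "point_weight x \<le> point_weight a" for x
    unfolding a[symmetric] by (rule Max_ge) auto
  define P where "P w = (\<chi> i. if i = a then 0 else w$i)" for w :: "complex^'n"
  define L where "L w = (T (sym_outer (axis a 1) (P w)), w$a)" for w
  have herm: "sym_outer (axis a 1) (P w) \<in> herm0" for w
    by (rule sym_outer_axis_herm0) (simp add: P_def)
  have P: "P (x + y) = P x + P y" "P (c *\<^sub>R x) = c *\<^sub>R P x" for x y c
    by (simp_all add: P_def vec_eq_iff)
  have "linear L"
    by (rule linearI) (simp_all add: L_def P sym_outer_add sym_outer_scaleR add scaleR herm)
  moreover have "inj L"
    unfolding linear_injective_0[OF \<open>linear L\<close>]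
  proof (intro allI impI)
    fix w
    assume "L w = 0"
    then have "w$a = 0" "T (sym_outer (axis a 1) (P w)) = 0"
      by (simp_all add: L_def zero_prod_def)
    moreover from \<open>w$a = 0\<close> have "P w = w"
      by (auto simp: P_def vec_eq_iff)
    ultimately show "w = 0"
      using sym_outer_axis_kernel[OF assms max] by simp
  qed
  ultimately show ?thesis
    using that by blast
qed

end

lemma two_card_le_DIM_if_unit_norm_on_iherm0:
  fixes T :: "complex^'n::finite^'n \<Rightarrow> 'v::euclidean_space"
  assumes "unit_norm_on_iherm0 T" "4 \<le> CARD('n)"
  shows "2 * CARD('n) \<le> DIM('v) + 2"
proof -
  obtain L :: "complex^'n \<Rightarrow> 'v \<times> complex" where "linear L" "inj L"
    using unit_norm_on_iherm0.exists_inj_linear_into_prod[OF assms] by blast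
  then have "dim (range L) = dim (UNIV :: (complex^'n) set)"
    by (intro dim_image_eq) (auto intro: inj_on_subset)
  moreover have "dim (range L) \<le> DIM('v \<times> complex)"
    by (rule dim_subset_UNIV)
  ultimately show ?thesis
    by (simp add: dim_UNIV)
qed

lemma unit_norm_on_iherm0_column:
  fixes \<phi> :: "complex^'n::finite^'n \<Rightarrow> complex^'m::finite^'m"
  assumes "even CARD('n)" "real_linear_on_herm0 \<phi>" "\<phi> ` iherm0 \<subseteq> unitary_mats"
  shows "unit_norm_on_iherm0 (\<lambda>A. column j (\<phi> A))"
proof
  fix A B :: "complex^'n^'n" and r :: real
  assume "A \<in> herm0" "B \<in> herm0"
  with assms(2) show "column j (\<phi> (A + B)) = column j (\<phi> A) + column j (\<phi> B)"
    by (simp add: real_linear_on_herm0_def column_def vec_eq_iff)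
  from \<open>A \<in> herm0\<close> assms(2) show "column j (\<phi> (r *\<^sub>R A)) = r *\<^sub>R column j (\<phi> A)"
    by (simp add: real_linear_on_herm0_def column_def vec_eq_iff)
next
  fix A :: "complex^'n^'n"
  assume "A \<in> iherm0"
  with assms(3) show "norm (column j (\<phi> A)) = 1"
    by (auto intro: norm_column_unitary)
qed (rule assms(1))

section \<open>Parity of the target dimension\<close>

lemma even_card_if_anticommuting:
  fixes X Y :: "'a::{idom, ring_char_0}^'n::finite^'n"
  assumes "det X \<noteq> 0" "det Y \<noteq> 0" "X ** Y = - (Y ** X)"
  shows "even CARD('n)"
proof -
  have "det (X ** Y) = det (- (Y ** X))"
    using assms(3) by simp
  also have "\<dots> = (-1) ^ CARD('n) * det (Y ** X)"
    by (rule det_uminus)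
  also have "det (Y ** X) = det (X ** Y)"
    by (simp add: det_mul mult.commute)
  finally have "det (X ** Y) = (-1) ^ CARD('n) * det (X ** Y)" .
  moreover have "det (X ** Y) \<noteq> 0"
    using assms(1,2) by (simp add: det_mul)
  ultimately have "(-1 :: 'a) ^ CARD('n) = 1"
    by simp
  then show ?thesis
    by (metis neg_one_odd_power one_neq_neg_one)
qed

lemma exists_sign_reversing_involution:
  assumes "even CARD('n)"
  obtains p :: "'n::finite \<Rightarrow> 'n" and s :: "'n \<Rightarrow> complex"
  where "\<And>x. p (p x) = x" "\<And>x. s x = 1 \<or> s x = -1" "\<And>x. s (p x) = - s x"
proof -
  obtain H :: "'n set" where H: "card H = CARD('n) div 2"
    using obtain_subset_with_card_n[of "CARD('n) div 2" "UNIV :: 'n set"] by auto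
  have "card (UNIV - H) = CARD('n) div 2"
    using H assms by (simp add: card_Diff_subset) presburger
  then obtain g where g: "bij_betw g H (UNIV - H)"
    using finite_same_card_bij[of H "UNIV - H"] H by auto
  define p where "p x = (if x \<in> H then g x else inv_into H g x)" for x
  have pH: "p x \<in> H \<longleftrightarrow> x \<notin> H" for x
    using g by (auto simp: p_def bij_betw_def inv_into_into)
  define s where "s x = (if x \<in> H then 1 else -1 :: complex)" for x
  have "p (p x) = x" for x
    using g pH[of x] by (auto simp: p_def bij_betw_def f_inv_into_f)
  moreover have "s x = 1 \<or> s x = -1" "s (p x) = - s x" for x
    using pH[of x] by (auto simp: s_def)
  ultimately show ?thesis
    by (rule that)
qed

lemma exists_anticommuting_iherm0_triple:
  assumes "even CARD('n)"
  obtains A B C :: "complex^'n::finite^'n"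
  where "A \<in> iherm0" "B \<in> iherm0" "C \<in> iherm0"
    "A ** B = - (B ** A)" "A ** C = - (C ** A)" "B ** C = - (C ** B)"
proof -
  obtain p :: "'n \<Rightarrow> 'n" and s :: "'n \<Rightarrow> complex" where p: "\<And>x. p (p x) = x"
    and s: "\<And>x. s x = 1 \<or> s x = -1" "\<And>x. s (p x) = - s x"
    using exists_sign_reversing_involution[OF assms] by blast
  have no_fix: "p x \<noteq> x" for x
    using s[of x] by force
  have "sum s UNIV = sum (s \<circ> p) UNIV"
    using p by (intro sum.reindex_bij_witness[of _ p p]) auto
  then have "sum s UNIV = 0"
    using s(2) by (simp add: sum_negf)
  have p_id: "p \<circ> p = id"
    using p by auto
  let ?A = "monomial_mat p (\<lambda>_. 1)" and ?B = "monomial_mat p (\<lambda>x. \<i> * s x)"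
    and ?C = "monomial_mat id s"
  have s_real: "cnj (s x) = s x" "s x * s x = 1" for x
    using s(1)[of x] by auto
  have "?A \<in> iherm0" "?B \<in> iherm0"
    using p no_fix s(2) s_real by (auto intro!: monomial_mat_iherm0 simp: algebra_simps)
  moreover have "?C \<in> iherm0"
    using s_real \<open>sum s UNIV = 0\<close> by (intro monomial_mat_iherm0) auto
  moreover have "?A ** ?B = - (?B ** ?A)" "?A ** ?C = - (?C ** ?A)" "?B ** ?C = - (?C ** ?B)"
    using s by (simp_all add: monomial_mat_mult p_id mult.commute flip: monomial_mat_uminus)
  ultimately show ?thesis
    using that by blast
qed

lemma even_card_if_anticommuting_unitaries:
  fixes U V W :: "complex^'m::finite^'m"
  assumes unitary: "U \<in> unitary_mats" "V \<in> unitary_mats" "W \<in> unitary_mats"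
    and anti: "U ** cadj V + V ** cadj U = 0" "U ** cadj W + W ** cadj U = 0"
      "cadj V ** W + cadj W ** V = 0"
  shows "even CARD('m)"
proof -
  let ?X = "cadj U ** V" and ?Y = "cadj U ** W"
  have UU: "cadj U ** U = mat 1"
    using unitary(1) by (simp add: unitary_mats_def)
  have VU: "V ** cadj U = - (U ** cadj V)" and WU: "W ** cadj U = - (U ** cadj W)"
    using anti(1,2) by (simp_all add: eq_neg_iff_add_eq_0 add.commute)
  have "?X ** ?Y = cadj U ** (V ** cadj U) ** W"
    by (simp add: matrix_mul_assoc)
  also have "\<dots> = - (cadj U ** U ** cadj V ** W)"
    by (simp only: VU matrix_neg_left matrix_neg_right) (simp add: matrix_mul_assoc)
  finally have XY: "?X ** ?Y = - (cadj V ** W)"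
    by (simp add: UU)
  have "?Y ** ?X = cadj U ** (W ** cadj U) ** V"
    by (simp add: matrix_mul_assoc)
  also have "\<dots> = - (cadj U ** U ** cadj W ** V)"
    by (simp only: WU matrix_neg_left matrix_neg_right) (simp add: matrix_mul_assoc)
  finally have "?Y ** ?X = - (cadj W ** V)"
    by (simp add: UU)
  moreover have "- (cadj V ** W) = cadj W ** V"
    using anti(3) by (simp add: neg_eq_iff_add_eq_0)
  ultimately have "?X ** ?Y = - (?Y ** ?X)"
    using XY by simp
  moreover have det: "det (cadj Z) \<noteq> 0 \<and> det Z \<noteq> 0" if "Z \<in> unitary_mats" for Z
  proof -
    have "det (cadj Z) * det Z = 1"
      using det_mul[of "cadj Z" Z] unitary_matsD(2)[OF that] by simp
    then show ?thesis
      by auto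
  qed
  ultimately show ?thesis
    using det[OF unitary(1)] det[OF unitary(2)] det[OF unitary(3)]
    by (intro even_card_if_anticommuting[of ?X ?Y]) (simp_all add: det_mul)
qed

lemma cross_terms_of_unitary_on_iherm0:
  fixes \<phi> :: "complex^'n::finite^'n \<Rightarrow> complex^'m::finite^'m"
  assumes "real_linear_on_herm0 \<phi>" "\<phi> ` iherm0 \<subseteq> unitary_mats"
    and "A \<in> iherm0" "B \<in> iherm0" "A ** B = - (B ** A)"
  shows "\<phi> A ** cadj (\<phi> B) + \<phi> B ** cadj (\<phi> A) = 0"
    "cadj (\<phi> A) ** \<phi> B + cadj (\<phi> B) ** \<phi> A = 0"
proof -
  have "A \<in> herm0" "B \<in> herm0"
    using assms(3,4) by (simp_all add: iherm0_iff)
  then have "\<phi> ((1 / sqrt 2) *\<^sub>R (A + B)) = (1 / sqrt 2) *\<^sub>R (\<phi> A + \<phi> B)"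
    using assms(1) by (simp add: real_linear_on_herm0_def herm0_add)
  moreover have "\<phi> ((1 / sqrt 2) *\<^sub>R (A + B)) \<in> unitary_mats"
    using assms(2) iherm0_midpoint_if_anticommuting[OF assms(3-5)] by blast
  ultimately show "\<phi> A ** cadj (\<phi> B) + \<phi> B ** cadj (\<phi> A) = 0"
    "cadj (\<phi> A) ** \<phi> B + cadj (\<phi> B) ** \<phi> A = 0"
    using unitary_cross_terms_if_midpoint_unitary assms(2-4) by (metis image_subset_iff)+
qed

lemma even_card_if_unitary_on_iherm0:
  fixes \<phi> :: "complex^'n::finite^'n \<Rightarrow> complex^'m::finite^'m"
  assumes "even CARD('n)" "real_linear_on_herm0 \<phi>" "\<phi> ` iherm0 \<subseteq> unitary_mats"
  shows "even CARD('m)"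
proof -
  obtain A B C :: "complex^'n^'n" where iherm0: "A \<in> iherm0" "B \<in> iherm0" "C \<in> iherm0"
    and anti: "A ** B = - (B ** A)" "A ** C = - (C ** A)" "B ** C = - (C ** B)"
    using exists_anticommuting_iherm0_triple[OF assms(1)] by blast
  show ?thesis
  proof (rule even_card_if_anticommuting_unitaries)
    show "\<phi> A \<in> unitary_mats" "\<phi> B \<in> unitary_mats" "\<phi> C \<in> unitary_mats"
      using assms(3) iherm0 by blast+
  qed (use cross_terms_of_unitary_on_iherm0[OF assms(2,3)] iherm0 anti in blast)+
qed

theorem proposition3p11:
  fixes \<phi> :: "complex^'n::finite^'n \<Rightarrow> complex^'m::finite^'m"
  assumes "even CARD('n)"
    and "real_linear_on_herm0 \<phi>"
    and "\<phi> ` (iherm0 :: (complex^'n^'n) set) \<subseteq> (unitary_mats :: (complex^'m^'m) set)"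
  shows "CARD('m) \<ge> CARD('n)"
proof -
  have "even CARD('m)"
    using assms by (rule even_card_if_unitary_on_iherm0)
  show ?thesis
  proof (cases "4 \<le> CARD('n)")
    case True
    have "unit_norm_on_iherm0 (\<lambda>A. column (undefined :: 'm) (\<phi> A))"
      using assms by (rule unit_norm_on_iherm0_column)
    then have "2 * CARD('n) \<le> DIM(complex^'m) + 2"
      using True by (rule two_card_le_DIM_if_unit_norm_on_iherm0)
    then show ?thesis
      using \<open>even CARD('m)\<close> assms(1) by simp presburger
  next
    case False
    moreover have "0 < CARD('n)" "0 < CARD('m)"
      by simp_all
    ultimately show ?thesis
      using assms(1) \<open>even CARD('m)\<close> by presburger
  qed
qed

end
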